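(* Let $\lambda\in\overline{\mathbb C}_+\setminus\{0\}$ and put $h(x,\lambda)=\big|\exp\big(\tfrac23z(x,\lambda)^{3/2}\big)\big|=\exp\big(\mathrm{Re}\,\lambda\,\xi(x\lambda^{-1/2})\big)$ for $x\ge0$. Then: (1) if $\lambda>0$, then $h(\cdot,\lambda)$ is strictly increasing on $[x_*,\infty)$ and $h(\cdot,\lambda)\equiv1$ on $[0,x_*]$, where $x_*=\sqrt\lambda$; (2) if $0<\arg\lambda\le\pi$, then $h(\cdot,\lambda)$ is strictly increasing on $[0,\infty)$.
   Context: Powers and logarithms are principal on $\mathbb C\setminus(-\infty,0]$. $S(I)=\{re^{i\varphi}:r>0,\varphi\in I\}$. Let $\xi(t)=\int_1^t\sqrt{s^2-1}\,ds=\frac12\big(t\sqrt{t^2-1}-\log(t+\sqrt{t^2-1})\big)$, holomorphic on $S(-\pi/2,0)$ with $\xi(t)>0$ for $t>1$, extended by continuity to $\overline{S(-\pi/2,0)}$ (so $\xi(0)=i\pi/4$). It is a fact that $\xi(t)\ne0$ for $t\ne1$ and $\xi$ takes values with argument in $[-3\pi/2,0]$; let $\Phi(t)\in[-3\pi/2,0]$ be that determination of $\arg\xi(t)$. Define $k(t)=|\tfrac32\xi(t)|^{2/3}e^{\frac23i\Phi(t)}$ (so $k(0)=-(3\pi/8)^{2/3}$, $k>0$ for $t>1$); $k$ is a conformal map of $S(-\pi/2,0)$. For $\lambda=|\lambda|e^{2i\theta}$, $\theta\in[0,\pi/2]$, and $x\ge0$, set $z(x,\lambda)=\lambda^{2/3}k(x\lambda^{-1/2})$,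 and use the convention $\tfrac23z(x,\lambda)^{3/2}:=\lambda\,\xi(x\lambda^{-1/2})$. *)

theory Defs
  imports "HOL-Analysis.Analysis"
begin

text \<open>The branch of sqrt(t^2-1) on the closed sector S[-pi/2,0] that is the continuous
extension of the principal branch from the open sector S(-pi/2,0):
sqrt(t+1) * sqrt(t-1), where sqrt(t-1) is taken as the limit from the lower half plane,
i.e. -i * sqrt(1-t). On the open sector it coincides with the principal csqrt(t^2-1).\<close>
definition sqrt_t2m1 :: "complex \<Rightarrow> complex" where
  "sqrt_t2m1 t = csqrt (t + 1) * (- \<i> * csqrt (1 - t))"

definition xi :: "complex \<Rightarrow> complex" where
  "xi t = (t * sqrt_t2m1 t - Ln (t + sqrt_t2m1 t)) / 2"

definition h_fun :: "real \<Rightarrow> complex \<Rightarrow> real" where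
  "h_fun x lam = exp (Re (lam * xi (of_real x * lam powr (-1/2))))"

end

theory Submission
  imports Defs
begin

text \<open>Write \<open>\<lambda> = m\<^sup>2\<close> with \<open>m = csqrt \<lambda>\<close>, so that \<open>ln h(x,\<lambda>) = Re (\<lambda> \<xi>(x/m))\<close>.
Since \<open>\<xi>' = sqrt_t2m1\<close>, the \<open>x\<close>-derivative of this is \<open>Re w\<close> with \<open>w = m sqrt_t2m1 (x/m)\<close>,
a square root of \<open>x\<^sup>2 - \<lambda>\<close>. If \<open>\<lambda>\<close> is not a nonnegative real, then \<open>w\<close> is \<open>-\<i>\<close> times a
product of two first-quadrant numbers, so \<open>Re w \<ge> 0\<close>; and \<open>x\<^sup>2 - \<lambda>\<close> is never a nonpositive
real, so \<open>Re w \<noteq> 0\<close>. If \<open>\<lambda> = r > 0\<close>, then \<open>\<xi>\<close> is purely imaginary on \<open>[0,1]\<close>, where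
\<open>t sqrt_t2m1 t\<close> is imaginary and \<open>t + sqrt_t2m1 t\<close> unimodular, and on \<open>[1,\<infinity>)\<close> it is real with
derivative \<open>sqrt (t\<^sup>2 - 1) > 0\<close>.\<close>

lemma Im_csqrt_nonneg: "Im z \<ge> 0 \<Longrightarrow> Im (csqrt z) \<ge> 0"
  by (auto simp: sgn_if complex_Re_le_cmod)

lemma Im_csqrt_nonpos:
  assumes "Im z \<le> 0" and "Re z \<ge> 0"
  shows "Im (csqrt z) \<le> 0"
proof (cases "Im z = 0")
  case True
  with assms(2) show ?thesis by simp
next
  case False
  with assms(1) show ?thesis by (simp add: sgn_if complex_Re_le_cmod)
qed

lemma powr_minus_half: "z \<noteq> 0 \<Longrightarrow> z powr (-1/2) = inverse (csqrt z)"
  by (simp add: powr_def csqrt_exp_Ln exp_minus[symmetric])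

lemma Re_nonzero_if_square_notin_nonpos_Reals:
  fixes w :: complex
  assumes "w\<^sup>2 \<notin> \<real>\<^sub>\<le>\<^sub>0"
  shows "Re w \<noteq> 0"
proof
  assume "Re w = 0"
  then have "w\<^sup>2 = - of_real ((Im w)\<^sup>2)"
    by (simp add: complex_eq_iff power2_eq_square)
  with assms show False
    by (simp add: complex_nonpos_Reals_iff)
qed

text \<open>The derivative of \<open>(t s - log (t + s)) / 2\<close> when \<open>s\<^sup>2 = t\<^sup>2 - 1\<close> and \<open>s' = t / s\<close>.\<close>

lemma deriv_xi_formula_eq:
  fixes s t :: "'a :: field_char_0"
  assumes "s\<^sup>2 = t\<^sup>2 - 1" and "s \<noteq> 0" and "t + s \<noteq> 0"
  shows "(s + t * (t / s) - (1 + t / s) / (t + s)) / 2 = s"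
proof -
  have "1 + t / s = (t + s) / s"
    using assms(2) by (simp add: field_simps)
  then have "(1 + t / s) / (t + s) = 1 / s"
    using assms(3) by simp
  moreover have "t * (t / s) - 1 / s = s"
    using assms(1,2) by (simp add: field_simps power2_eq_square)
  ultimately show ?thesis
    by (simp add: field_simps)
qed

lemma sqrt_t2m1_squared: "(sqrt_t2m1 t)\<^sup>2 = t\<^sup>2 - 1"
  by (simp add: sqrt_t2m1_def power_mult_distrib) (simp add: algebra_simps power2_eq_square)

lemma scaled_sqrt_t2m1_squared:
  assumes "m \<noteq> 0"
  shows "(m * sqrt_t2m1 (z / m))\<^sup>2 = z\<^sup>2 - m\<^sup>2"
proof -
  have "(m * sqrt_t2m1 (z / m))\<^sup>2 = m\<^sup>2 * ((z / m)\<^sup>2 - 1)"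
    by (simp add: power_mult_distrib sqrt_t2m1_squared)
  also have "\<dots> = z\<^sup>2 - m\<^sup>2"
    using assms by (simp add: field_simps power2_eq_square)
  finally show ?thesis .
qed

lemma sqrt_t2m1_of_real_abs_le_1:
  assumes "\<bar>\<tau>\<bar> \<le> 1"
  shows "sqrt_t2m1 (of_real \<tau>) = - \<i> * of_real (sqrt (1 - \<tau>\<^sup>2))"
proof -
  have "sqrt (\<tau> + 1) * sqrt (1 - \<tau>) = sqrt (1 - \<tau>\<^sup>2)"
    by (simp add: real_sqrt_mult[symmetric] power2_eq_square algebra_simps)
  with assms show ?thesis
    by (simp add: sqrt_t2m1_def flip: of_real_mult)
qed

lemma sqrt_t2m1_of_real_ge_1:
  assumes "1 \<le> \<tau>"
  shows "sqrt_t2m1 (of_real \<tau>) = of_real (sqrt (\<tau>\<^sup>2 - 1))"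
proof -
  have "sqrt (\<tau> + 1) * sqrt (\<tau> - 1) = sqrt (\<tau>\<^sup>2 - 1)"
    by (simp add: real_sqrt_mult[symmetric] power2_eq_square algebra_simps)
  with assms show ?thesis
    by (simp add: sqrt_t2m1_def flip: of_real_mult)
qed

text \<open>\<open>t + s\<close> and \<open>t - s\<close> are reciprocal, so \<open>t\<close> is the Joukowski image of \<open>t + s\<close>.\<close>

lemma Reals_if_add_sqrt_t2m1_Reals:
  assumes "t + sqrt_t2m1 t \<in> \<real>"
  shows "t \<in> \<real>"
proof -
  define u where "u = t + sqrt_t2m1 t"
  have "u * (t - sqrt_t2m1 t) = t\<^sup>2 - (sqrt_t2m1 t)\<^sup>2"
    by (simp add: u_def power2_eq_square algebra_simps)
  then have "u * (t - sqrt_t2m1 t) = 1"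
    by (simp add: sqrt_t2m1_squared)
  then have "inverse u = t - sqrt_t2m1 t"
    by (rule inverse_unique)
  then have "t = (u + inverse u) / 2"
    by (simp add: u_def field_simps)
  moreover have "u \<in> \<real>"
    using assms by (simp add: u_def)
  ultimately show ?thesis
    by (metis Reals_add Reals_inverse Reals_divide Reals_numeral)
qed

lemma has_field_derivative_sqrt_t2m1:
  assumes "t + 1 \<notin> \<real>\<^sub>\<le>\<^sub>0" and "1 - t \<notin> \<real>\<^sub>\<le>\<^sub>0"
  shows "(sqrt_t2m1 has_field_derivative t / sqrt_t2m1 t) (at t)"
proof -
  define P Q where "P = csqrt (t + 1)" and "Q = csqrt (1 - t)"
  have "P \<noteq> 0" "Q \<noteq> 0"
    using assms by (auto simp: P_def Q_def)
  have "(sqrt_t2m1 has_field_derivative 1 / (2 * P) * (- \<i> * Q) + P * (- \<i> * (-1 / (2 * Q)))) (at t)"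
    unfolding sqrt_t2m1_def[abs_def] P_def Q_def using assms
    by (auto intro!: derivative_eq_intros)
  moreover have "1 / (2 * P) * (- \<i> * Q) + P * (- \<i> * (-1 / (2 * Q))) = t / sqrt_t2m1 t"
  proof -
    have "1 / (2 * P) * (- \<i> * Q) + P * (- \<i> * (-1 / (2 * Q))) = - \<i> * (Q * Q - P * P) / (2 * P * Q)"
      using \<open>P \<noteq> 0\<close> \<open>Q \<noteq> 0\<close> by (simp add: field_simps)
    also have "Q * Q - P * P = - 2 * t"
      by (simp add: P_def Q_def flip: power2_eq_square)
    also have "- \<i> * (- 2 * t) / (2 * P * Q) = t / (- \<i> * P * Q)"
      using \<open>P \<noteq> 0\<close> \<open>Q \<noteq> 0\<close> by (simp add: field_simps)
    finally show ?thesis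
      by (simp add: sqrt_t2m1_def P_def Q_def)
  qed
  ultimately show ?thesis
    by simp
qed

lemma has_field_derivative_xi:
  assumes "t + 1 \<notin> \<real>\<^sub>\<le>\<^sub>0" and "1 - t \<notin> \<real>\<^sub>\<le>\<^sub>0" and "t + sqrt_t2m1 t \<notin> \<real>\<^sub>\<le>\<^sub>0"
  shows "(xi has_field_derivative sqrt_t2m1 t) (at t)"
proof -
  define s where "s = sqrt_t2m1 t"
  have "s \<noteq> 0"
    using assms(1,2) by (auto simp: s_def sqrt_t2m1_def)
  have "t + s \<noteq> 0"
    using assms(3) by (auto simp: s_def)
  have "((\<lambda>t. (t * S t - Ln (t + S t)) / 2) has_field_derivative (S t + t * S' - (1 + S') / (t + S t)) / 2) (at t)"
    if "(S has_field_derivative S') (at t)" and "t + S t \<notin> \<real>\<^sub>\<le>\<^sub>0" for S S'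
    using that by (auto intro!: derivative_eq_intros simp: field_simps)
  from this[OF has_field_derivative_sqrt_t2m1[OF assms(1,2)] assms(3)]
  have "(xi has_field_derivative (s + t * (t / s) - (1 + t / s) / (t + s)) / 2) (at t)"
    by (simp add: xi_def[abs_def] s_def)
  also have "(s + t * (t / s) - (1 + t / s) / (t + s)) / 2 = s"
    using \<open>s \<noteq> 0\<close> \<open>t + s \<noteq> 0\<close> by (intro deriv_xi_formula_eq) (simp_all add: s_def sqrt_t2m1_squared)
  finally show ?thesis
    unfolding s_def .
qed

lemma has_field_derivative_xi_off_cuts:
  assumes "t \<in> \<real> \<Longrightarrow> \<bar>Re t\<bar> < 1"
  shows "(xi has_field_derivative sqrt_t2m1 t) (at t)"
proof (cases "t \<in> \<real>")
  case True
  then obtain \<tau> where t: "t = of_real \<tau>"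
    using Reals_cases by blast
  with True assms have "\<bar>\<tau>\<bar> < 1"
    by simp
  then have "\<tau>\<^sup>2 < 1"
    by (simp add: abs_square_less_1)
  then have "Im (t + sqrt_t2m1 t) \<noteq> 0"
    using \<open>\<bar>\<tau>\<bar> < 1\<close> by (simp add: t sqrt_t2m1_of_real_abs_le_1)
  with \<open>\<bar>\<tau>\<bar> < 1\<close> show ?thesis
    by (intro has_field_derivative_xi) (auto simp: t complex_nonpos_Reals_iff)
next
  case False
  then have "t + sqrt_t2m1 t \<notin> \<real>"
    using Reals_if_add_sqrt_t2m1_Reals by blast
  with False show ?thesis
    by (intro has_field_derivative_xi) (auto dest: nonpos_Reals_subset_Reals[THEN subsetD]
        simp: complex_is_Real_iff)
qed

lemma first_quadrant_scaled_csqrt: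
  fixes m :: complex and x :: real
  assumes "Re m \<ge> 0" and "Im m > 0" and "x \<ge> 0"
  defines "u \<equiv> m * csqrt (of_real x / m + 1)"
  shows "Re u \<ge> 0" and "Im u \<ge> 0"
proof -
  define t where "t = of_real x / m"
  define P where "P = csqrt (t + 1)"
  have "u = m * P"
    by (simp add: u_def P_def t_def)
  have "(Re m)\<^sup>2 + (Im m)\<^sup>2 > 0"
    using assms(2) by (simp add: add_nonneg_pos)
  with assms(1-3) have "Im t \<le> 0" "Re t \<ge> 0"
    by (simp_all add: t_def Re_divide Im_divide divide_nonpos_pos)
  have P: "Re P \<ge> 0" "Im P \<le> 0"
    unfolding P_def by (rule Re_csqrt, rule Im_csqrt_nonpos) (use \<open>Im t \<le> 0\<close> \<open>Re t \<ge> 0\<close> in simp_all)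
  have Re_u: "Re u = Re m * Re P - Im m * Im P"
    by (simp add: \<open>u = m * P\<close>)
  have "Re m * Re P \<ge> 0" "Im m * Im P \<le> 0"
    using assms(1-3) P by (simp_all add: mult_nonneg_nonpos)
  then show "Re u \<ge> 0"
    unfolding Re_u by linarith
  show "Im u \<ge> 0"
  proof (cases "Re u = 0")
    case True
    with \<open>Re m * Re P \<ge> 0\<close> \<open>Im m * Im P \<le> 0\<close> have "Im m * Im P = 0"
      unfolding Re_u by linarith
    with assms(2) have "Im P = 0"
      by simp
    with assms(1-3) P show ?thesis
      by (simp add: \<open>u = m * P\<close>)
  next
    case False
    have "m \<noteq> 0"
      using assms(2) by auto
    have "u\<^sup>2 = m\<^sup>2 * (t + 1)"
      by (simp add: \<open>u = m * P\<close> P_def power_mult_distrib)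
    also have "\<dots> = m\<^sup>2 + of_real x * m"
      using \<open>m \<noteq> 0\<close> by (simp add: t_def field_simps power2_eq_square)
    finally have "Im (u\<^sup>2) = Im (m\<^sup>2 + of_real x * m)"
      by simp
    then have "2 * Re u * Im u = 2 * Re m * Im m + x * Im m"
      by (simp add: power2_eq_square algebra_simps)
    also have "\<dots> \<ge> 0"
      using assms(1-3) by simp
    finally show ?thesis
      using False \<open>Re u \<ge> 0\<close> by (simp add: zero_le_mult_iff)
  qed
qed

lemma Re_scaled_sqrt_t2m1_nonneg:
  fixes m :: complex and x :: real
  assumes "Re m \<ge> 0" and "Im m > 0" and "x \<ge> 0"
  shows "Re (m * sqrt_t2m1 (of_real x / m)) \<ge> 0"
proof -
  define u where "u = m * csqrt (of_real x / m + 1)"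
  define Q where "Q = csqrt (1 - of_real x / m)"
  have "Im (of_real x / m) \<le> 0"
    using assms by (simp add: Im_divide divide_nonpos_nonneg)
  have Q: "Re Q \<ge> 0" "Im Q \<ge> 0"
    unfolding Q_def by (rule Re_csqrt, rule Im_csqrt_nonneg) (use \<open>Im (of_real x / m) \<le> 0\<close> in simp)
  have "m * sqrt_t2m1 (of_real x / m) = - \<i> * (u * Q)"
    by (simp add: sqrt_t2m1_def u_def Q_def algebra_simps)
  then have "Re (m * sqrt_t2m1 (of_real x / m)) = Re u * Im Q + Im u * Re Q"
    by simp
  with first_quadrant_scaled_csqrt[OF assms, folded u_def] Q show ?thesis
    by simp
qed

lemma Re_scaled_sqrt_t2m1_pos:
  fixes m :: complex and x :: real
  assumes "Re m \<ge> 0" and "Im m > 0" and "x \<ge> 0"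
  shows "Re (m * sqrt_t2m1 (of_real x / m)) > 0"
proof -
  have "m \<noteq> 0"
    using assms(2) by auto
  have "of_real x ^ 2 - m\<^sup>2 \<notin> \<real>\<^sub>\<le>\<^sub>0"
  proof (cases "Re m = 0")
    case True
    with assms(2) have "Re (of_real x ^ 2 - m\<^sup>2) > 0"
      by (simp add: power2_eq_square add_nonneg_pos)
    then show ?thesis
      by (auto simp: complex_nonpos_Reals_iff)
  next
    case False
    with assms(1) have "Re m > 0"
      by simp
    with assms(2) have "Im (of_real x ^ 2 - m\<^sup>2) < 0"
      by (simp add: power2_eq_square)
    then show ?thesis
      by (auto simp: complex_nonpos_Reals_iff)
  qed
  then have "Re (m * sqrt_t2m1 (of_real x / m)) \<noteq> 0"
    by (intro Re_nonzero_if_square_notin_nonpos_Reals) (simp add: scaled_sqrt_t2m1_squared[OF \<open>m \<noteq> 0\<close>])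
  with Re_scaled_sqrt_t2m1_nonneg[OF assms] show ?thesis
    by simp
qed

lemma has_real_derivative_Re_scaled_xi:
  fixes m :: complex and x :: real
  assumes "Im m > 0" and "x \<ge> 0"
  shows "((\<lambda>x. Re (m\<^sup>2 * xi (of_real x / m))) has_real_derivative Re (m * sqrt_t2m1 (of_real x / m))) (at x)"
proof -
  have "m \<noteq> 0"
    using assms(1) by auto
  have Im_t: "Im (of_real x / m) = - x * Im m / ((Re m)\<^sup>2 + (Im m)\<^sup>2)"
    by (simp add: Im_divide power2_eq_square)
  have "of_real x / m \<in> \<real> \<Longrightarrow> \<bar>Re (of_real x / m)\<bar> < 1"
    using assms by (cases "x = 0") (auto simp: complex_is_Real_iff Im_t add_pos_nonneg)
  moreover have "((\<lambda>z. z / m) has_field_derivative 1 / m) (at (of_real x))"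
    using \<open>m \<noteq> 0\<close> by (auto intro!: derivative_eq_intros)
  ultimately have "((\<lambda>z. xi (z / m)) has_field_derivative sqrt_t2m1 (of_real x / m) * (1 / m)) (at (of_real x))"
    by (rule DERIV_chain2[OF has_field_derivative_xi_off_cuts])
  then have "((\<lambda>z. m\<^sup>2 * xi (z / m)) has_field_derivative m\<^sup>2 * (sqrt_t2m1 (of_real x / m) * (1 / m))) (at (of_real x))"
    by (rule DERIV_cmult)
  also have "m\<^sup>2 * (sqrt_t2m1 (of_real x / m) * (1 / m)) = m * sqrt_t2m1 (of_real x / m)"
    using \<open>m \<noteq> 0\<close> by (simp add: field_simps power2_eq_square)
  finally show ?thesis
    by (rule has_field_derivative_Re[OF has_vector_derivative_real_field])
qed

lemma strict_mono_on_h_fun_off_nonneg_Reals: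
  assumes "Im lam \<ge> 0" and "lam \<notin> \<real>\<^sub>\<ge>\<^sub>0"
  shows "strict_mono_on {0..} (\<lambda>x. h_fun x lam)"
proof -
  define m where "m = csqrt lam"
  have "lam \<noteq> 0" "m\<^sup>2 = lam"
    using assms(2) by (auto simp: m_def)
  have "Re m \<ge> 0"
    unfolding m_def by (rule Re_csqrt)
  have "Im m \<ge> 0"
    unfolding m_def using assms(1) by (rule Im_csqrt_nonneg)
  moreover have "Im m \<noteq> 0"
    unfolding m_def Im_csqrt_eq_0_iff using assms(2) .
  ultimately have "Im m > 0"
    by simp
  define F where "F x = Re (m\<^sup>2 * xi (of_real x / m))" for x
  have "lam powr (-1/2) = inverse m"
    unfolding m_def using \<open>lam \<noteq> 0\<close> by (rule powr_minus_half)
  then have h_eq: "h_fun x lam = exp (F x)" for x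
    by (simp only: h_fun_def F_def \<open>m\<^sup>2 = lam\<close> divide_inverse)
  have "F a < F b" if "0 \<le> a" "a < b" for a b
  proof (rule DERIV_pos_imp_increasing[OF \<open>a < b\<close>])
    fix y
    assume "a \<le> y"
    with \<open>0 \<le> a\<close> have "y \<ge> 0"
      by linarith
    with has_real_derivative_Re_scaled_xi[OF \<open>Im m > 0\<close>, folded F_def]
      Re_scaled_sqrt_t2m1_pos[OF \<open>Re m \<ge> 0\<close> \<open>Im m > 0\<close>]
    show "\<exists>d. DERIV F y :> d \<and> d > 0"
      by blast
  qed
  then show ?thesis
    by (auto simp: strict_mono_on_def h_eq)
qed

lemma Re_xi_of_real_abs_le_1:
  assumes "\<bar>\<tau>\<bar> \<le> 1"
  shows "Re (xi (of_real \<tau>)) = 0"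
proof -
  have "\<tau>\<^sup>2 \<le> 1"
    using assms by (simp add: abs_square_le_1)
  then have "cmod (of_real \<tau> + sqrt_t2m1 (of_real \<tau>)) = 1"
    using assms by (simp add: sqrt_t2m1_of_real_abs_le_1 cmod_def)
  then have "Re (Ln (of_real \<tau> + sqrt_t2m1 (of_real \<tau>))) = 0"
    by (subst Re_Ln) auto
  then show ?thesis
    using assms by (simp add: xi_def sqrt_t2m1_of_real_abs_le_1)
qed

lemma add_sqrt_square_minus_1_pos:
  fixes \<tau> :: real
  assumes "1 \<le> \<tau>"
  shows "\<tau> + sqrt (\<tau>\<^sup>2 - 1) > 0"
proof -
  have "1 \<le> \<tau>\<^sup>2"
    using assms by (simp add: one_le_power)
  then show ?thesis
    using assms by (simp add: add_pos_nonneg)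
qed

definition xi_real :: "real \<Rightarrow> real" where
  "xi_real \<tau> = (\<tau> * sqrt (\<tau>\<^sup>2 - 1) - ln (\<tau> + sqrt (\<tau>\<^sup>2 - 1))) / 2"

lemma xi_of_real_ge_1:
  assumes "1 \<le> \<tau>"
  shows "xi (of_real \<tau>) = of_real (xi_real \<tau>)"
  using add_sqrt_square_minus_1_pos[OF assms] assms
  by (simp add: xi_def xi_real_def sqrt_t2m1_of_real_ge_1 Ln_of_real flip: of_real_add)

lemma has_real_derivative_xi_real:
  assumes "1 < \<tau>"
  shows "(xi_real has_real_derivative sqrt (\<tau>\<^sup>2 - 1)) (at \<tau>)"
proof -
  define \<sigma> where "\<sigma> = sqrt (\<tau>\<^sup>2 - 1)"
  have "\<tau>\<^sup>2 - 1 > 0"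
    using assms by (simp add: one_less_power)
  then have "\<sigma> > 0" "\<sigma>\<^sup>2 = \<tau>\<^sup>2 - 1"
    by (simp_all add: \<sigma>_def)
  then have "\<tau> + \<sigma> > 0"
    using assms by simp
  have chain: "((\<lambda>\<tau>. (\<tau> * S \<tau> - ln (\<tau> + S \<tau>)) / 2) has_real_derivative (S \<tau> + \<tau> * S' - (1 + S') / (\<tau> + S \<tau>)) / 2) (at \<tau>)"
    if "(S has_real_derivative S') (at \<tau>)" and "\<tau> + S \<tau> > 0" for S S'
    using that by (auto intro!: derivative_eq_intros simp: field_simps)
  have "((\<lambda>\<tau>. sqrt (\<tau>\<^sup>2 - 1)) has_real_derivative inverse \<sigma> / 2 * (2 * \<tau>)) (at \<tau>)"
    unfolding \<sigma>_def using \<open>\<tau>\<^sup>2 - 1 > 0\<close> by (auto intro!: derivative_eq_intros)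
  then have "((\<lambda>\<tau>. sqrt (\<tau>\<^sup>2 - 1)) has_real_derivative \<tau> / \<sigma>) (at \<tau>)"
    by (simp add: field_simps)
  from chain[OF this \<open>\<tau> + \<sigma> > 0\<close>[unfolded \<sigma>_def]]
  have "(xi_real has_real_derivative (\<sigma> + \<tau> * (\<tau> / \<sigma>) - (1 + \<tau> / \<sigma>) / (\<tau> + \<sigma>)) / 2) (at \<tau>)"
    unfolding xi_real_def[abs_def] \<sigma>_def .
  also have "(\<sigma> + \<tau> * (\<tau> / \<sigma>) - (1 + \<tau> / \<sigma>) / (\<tau> + \<sigma>)) / 2 = \<sigma>"
    using \<open>\<sigma> > 0\<close> \<open>\<tau> + \<sigma> > 0\<close> \<open>\<sigma>\<^sup>2 = \<tau>\<^sup>2 - 1\<close> by (intro deriv_xi_formula_eq) auto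
  finally show ?thesis
    unfolding \<sigma>_def .
qed

lemma xi_real_strict_mono_on: "strict_mono_on {1..} xi_real"
proof (rule strict_mono_onI)
  fix a b :: real
  assume "a \<in> {1..}" "b \<in> {1..}" "a < b"
  show "xi_real a < xi_real b"
  proof (rule DERIV_pos_imp_increasing_open[OF \<open>a < b\<close>])
    fix \<tau>
    assume "a < \<tau>"
    with \<open>a \<in> {1..}\<close> have "1 < \<tau>"
      by simp
    then have "sqrt (\<tau>\<^sup>2 - 1) > 0"
      by (simp add: one_less_power)
    with has_real_derivative_xi_real[OF \<open>1 < \<tau>\<close>]
    show "\<exists>y. (xi_real has_real_derivative y) (at \<tau>) \<and> 0 < y"
      by blast
  next
    have "x + sqrt (x\<^sup>2 - 1) \<noteq> 0" if "x \<in> {a..b}" for x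
      using that \<open>a \<in> {1..}\<close> add_sqrt_square_minus_1_pos[of x] by auto
    then show "continuous_on {a..b} xi_real"
      unfolding xi_real_def by (intro continuous_intros) auto
  qed
qed

lemma h_fun_pos_real:
  assumes "r > 0"
  shows "strict_mono_on {sqrt r..} (\<lambda>x. h_fun x (of_real r))"
    and "\<forall>x\<in>{0..sqrt r}. h_fun x (of_real r) = 1"
proof -
  have "(of_real r :: complex) powr (-1/2) = of_real (inverse (sqrt r))"
    using assms by (subst powr_minus_half) (simp_all add: csqrt_of_real)
  then have "of_real x * (of_real r :: complex) powr (-1/2) = of_real (x / sqrt r)" for x
    by (simp only: of_real_mult divide_inverse)
  then have h_eq: "h_fun x (of_real r) = exp (r * Re (xi (of_real (x / sqrt r))))" for x
    by (simp only: h_fun_def) simp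
  show "\<forall>x\<in>{0..sqrt r}. h_fun x (of_real r) = 1"
  proof
    fix x
    assume "x \<in> {0..sqrt r}"
    with assms have "\<bar>x / sqrt r\<bar> \<le> 1"
      by (simp add: divide_le_eq_1)
    then show "h_fun x (of_real r) = 1"
      by (simp only: h_eq Re_xi_of_real_abs_le_1) simp
  qed
  show "strict_mono_on {sqrt r..} (\<lambda>x. h_fun x (of_real r))"
  proof (rule strict_mono_onI)
    fix a b
    assume "a \<in> {sqrt r..}" "b \<in> {sqrt r..}" "a < b"
    with assms have "1 \<le> a / sqrt r" "1 \<le> b / sqrt r" "a / sqrt r < b / sqrt r"
      by (simp_all add: divide_strict_right_mono)
    then have "xi_real (a / sqrt r) < xi_real (b / sqrt r)"
      by (intro strict_mono_onD[OF xi_real_strict_mono_on]) auto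
    with assms show "h_fun a (of_real r) < h_fun b (of_real r)"
      by (simp only: h_eq xi_of_real_ge_1 \<open>1 \<le> a / sqrt r\<close> \<open>1 \<le> b / sqrt r\<close> Re_complex_of_real) simp
  qed
qed

theorem lemma2p3:
  fixes lam :: complex
  assumes "Im lam \<ge> 0" and "lam \<noteq> 0"
  shows "(lam \<in> \<real> \<and> Re lam > 0 \<longrightarrow>
            strict_mono_on {sqrt (Re lam)..} (\<lambda>x. h_fun x lam) \<and>
            (\<forall>x\<in>{0..sqrt (Re lam)}. h_fun x lam = 1)) \<and>
         (0 < Arg lam \<and> Arg lam \<le> pi \<longrightarrow> strict_mono_on {0..} (\<lambda>x. h_fun x lam))"
proof (intro conjI impI; elim conjE)
  assume "lam \<in> \<real>" "Re lam > 0"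
  then obtain r where "lam = of_real r" "r > 0"
    by (auto elim: Reals_cases)
  with h_fun_pos_real[of r]
  show "strict_mono_on {sqrt (Re lam)..} (\<lambda>x. h_fun x lam)"
    and "\<forall>x\<in>{0..sqrt (Re lam)}. h_fun x lam = 1"
    by simp_all
next
  assume "0 < Arg lam"
  then have "lam \<notin> \<real>\<^sub>\<ge>\<^sub>0"
    by (auto simp: Arg_pos_iff complex_nonneg_Reals_iff)
  with assms(1) show "strict_mono_on {0..} (\<lambda>x. h_fun x lam)"
    by (rule strict_mono_on_h_fun_off_nonneg_Reals)
qed

end
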